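(* For any integers $n\ge2$ and $1\le m\le (n-1)^2$, the Laplacian matrix $L(n,m)$ of $\mathbb G(n,m)$ satisfies $[L(n,m)]_{in}=0$ for every $i\in\{1,\dots,n-1\}$.
   Context: For integers $n\ge2$ and $0\le m\le n(n-1)$, $\mathbb G(n,m)$ is the simple directed graph on vertex set $\{1,\dots,n\}$ whose arc set is $\{(\lceil \frac{i}{n-1}\rceil,\ n-((i-1)\bmod n)) : i=1,\dots,m\}$, where an arc $(j,k)$ goes from $j$ to $k$ and $a\bmod b\in\{0,\dots,b-1\}$; these $m$ pairs are pairwise distinct pairs of distinct vertices. The (in-degree) Laplacian of a directed graph is $L=D-A$, $D$ the diagonal matrix of in-degrees, $A_{ij}=1$ if $(j,i)$ is an arc and $0$ otherwise; $[L]_{ij}$ denotes its $ij$th entry. *)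

theory Defs
  imports Complex_Main
begin

text \<open>Arc set of the digraph G(n,m) on vertices 1..n: the i-th arc (i = 1..m) goes
  from ceil(i/(n-1)) to n - ((i-1) mod n).  An arc (j,k) goes from j to k.\<close>
definition G_arcs :: "nat \<Rightarrow> nat \<Rightarrow> (nat \<times> nat) set" where
  "G_arcs n m = {(nat \<lceil>real i / real (n - 1)\<rceil>, n - ((i - 1) mod n)) | i. 1 \<le> i \<and> i \<le> m}"

definition G_indeg :: "nat \<Rightarrow> nat \<Rightarrow> nat \<Rightarrow> nat" where
  "G_indeg n m k = card {j. (j, k) \<in> G_arcs n m}"

definition G_laplacian :: "nat \<Rightarrow> nat \<Rightarrow> nat \<Rightarrow> nat \<Rightarrow> int" where
  "G_laplacian n m i j =
     (if i = j then int (G_indeg n m i) else 0) - (if (j, i) \<in> G_arcs n m then 1 else 0)"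

end

theory Submission
  imports Defs
begin

text \<open>The source of the i-th arc is \<open>\<lceil>i/(n-1)\<rceil>\<close>, which never exceeds \<open>\<lceil>m/(n-1)\<rceil> \<le> n - 1\<close>
  when \<open>m \<le> (n-1)\<^sup>2\<close>. So vertex n has no outgoing arcs, and all off-diagonal entries of
  the n-th column of the in-degree Laplacian vanish.\<close>

lemma nat_ceiling_divide_le:
  fixes k d c :: nat
  assumes "k \<le> d * c"
  shows "nat \<lceil>real k / real d\<rceil> \<le> c"
proof (cases "d = 0")
  case False
  have "real k \<le> real c * real d"
    using assms by (metis mult.commute of_nat_le_iff of_nat_mult)
  then have "real k / real d \<le> real c"
    using False by (simp add: divide_le_eq)
  then show ?thesis
    by (simp add: ceiling_le_iff nat_le_iff)
qed simp

lemma G_arcs_source_le: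
  assumes "m \<le> (n - 1) * c" and "(j, k) \<in> G_arcs n m"
  shows "j \<le> c"
proof -
  obtain i where "i \<le> m" and j: "j = nat \<lceil>real i / real (n - 1)\<rceil>"
    using assms(2) unfolding G_arcs_def by auto
  with assms(1) have "i \<le> (n - 1) * c" by simp
  then show ?thesis
    unfolding j by (rule nat_ceiling_divide_le)
qed

lemma G_laplacian_off_diagonal_non_arc:
  assumes "i \<noteq> j" and "(j, i) \<notin> G_arcs n m"
  shows "G_laplacian n m i j = 0"
  using assms unfolding G_laplacian_def by simp

theorem lemma15:
  fixes n m i :: nat
  assumes "n \<ge> 2" and "1 \<le> m" and "m \<le> (n - 1)^2"
    and "1 \<le> i" and "i \<le> n - 1"
  shows "G_laplacian n m i n = 0"
proof (rule G_laplacian_off_diagonal_non_arc)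
  show "i \<noteq> n"
    using assms(5) assms(1) by simp
  show "(n, i) \<notin> G_arcs n m"
  proof
    assume arc: "(n, i) \<in> G_arcs n m"
    have "m \<le> (n - 1) * (n - 1)"
      using assms(3) by (simp add: power2_eq_square)
    then have "n \<le> n - 1"
      using arc by (rule G_arcs_source_le)
    with assms(1) show False by simp
  qed
qed

end
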